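(* Define the formal power series $z_1(g,\mathfrak{g})=\sum_{T} g^{e(T)}\,\mathfrak{g}^{m(T)}$, where the sum runs over all rooted plane trees $T$ (including the single-vertex tree) each of whose edges carries a mark from $\{+,0,-\}$, $e(T)$ is the number of edges, and $m(T)$ is the number of non-root vertices that are local maxima of the induced vertex labeling. Then $z_1$ is the unique formal power series in $g$ (with coefficients polynomial in $\mathfrak{g}$) with constant term $1$ satisfying $$3g^2 z_1^4-4g z_1^3+\big(1+2g(1-2\mathfrak{g})\big)z_1^2-1=0.$$ In particular $z_1=\frac{1-\sqrt{1-12g}}{6g}$ for $\mathfrak{g}=1$ and $z_1=\frac{1-\sqrt{1-4g}}{2g}$ for $\mathfrak{g}=0$.
   Context: A rooted plane tree is a finite tree embedded in the plane with a distinguished root vertex (and root corner); edges are oriented away from the root. Given marks in $\{+,0,-\}$ on the edges, the induced vertex labeling assigns label $0$ to the root and increases the label by $+1$, $0$, $-1$ respectively along an edge marked $+$, $0$, $-$ in the direction away from the root. A vertex is a local maximum if its label is greater than or equal to the labels of all its neighbours in the tree. (Via the Cori–Vauquelin–Schaeffer bijection these trees encode rooted pointed quadrangulations with $e(T)$ faces, and the non-root local maxima of the tree correspond to local maxima of the distance labeling.) *)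

theory Defs
  imports "HOL-Computational_Algebra.Computational_Algebra"
begin

datatype mark = MPlus | MZero | MMinus

fun delta :: "mark \<Rightarrow> int" where
  "delta MPlus = 1" | "delta MZero = 0" | "delta MMinus = -1"

text \<open>Rooted plane trees with marked edges: a vertex is given by the ordered
  list of its children, each child together with the mark of the edge leading
  to it (edges oriented away from the root).\<close>
datatype mtree = Node "(mark \<times> mtree) list"

fun edges :: "mtree \<Rightarrow> nat" where
  "edges (Node cs) = sum_list (map (\<lambda>c. Suc (edges (snd c))) cs)"

fun is_locmax :: "int \<Rightarrow> int \<Rightarrow> mtree \<Rightarrow> bool" where
  "is_locmax lp l (Node ds) = (lp \<le> l \<and> (\<forall>d\<in>set ds. l + delta (fst d) \<le> l))"

fun locmax_below :: "int \<Rightarrow> mtree \<Rightarrow> nat" where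
  "locmax_below l (Node cs) =
     sum_list (map (\<lambda>c. (if is_locmax l (l + delta (fst c)) (snd c) then 1 else 0)
                         + locmax_below (l + delta (fst c)) (snd c)) cs)"

definition locmax :: "mtree \<Rightarrow> nat" where
  "locmax T = locmax_below 0 T"

definition z1 :: "real poly fps" where
  "z1 = Abs_fps (\<lambda>n. \<Sum>T\<in>{T. edges T = n}. monom 1 (locmax T))"

text \<open>The defining quartic, with g = fps_X and frak g = the polynomial variable.\<close>
definition quartic :: "real poly fps \<Rightarrow> bool" where
  "quartic z \<longleftrightarrow>
     fps_const 3 * fps_X ^ 2 * z ^ 4 - fps_const 4 * fps_X * z ^ 3
     + (1 + fps_const 2 * fps_X * fps_const (1 - 2 * [:0, 1:])) * z ^ 2 - 1 = 0"

definition spec :: "real \<Rightarrow> real poly fps \<Rightarrow> real fps" where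
  "spec a z = Abs_fps (\<lambda>n. poly (fps_nth z n) a)"

text \<open>Formal square root (principal branch, constant term sqrt of the constant term).\<close>
definition fps_sqrt :: "real fps \<Rightarrow> real fps" where
  "fps_sqrt f = fps_radical (\<lambda>k x. root k x) 2 f"

end

theory Submission
  imports Defs
begin

text \<open>Whether a non-root vertex is a local maximum does not depend on the labels at all: the edge
  into it must not be marked \<open>-\<close> and no edge out of it may be marked \<open>+\<close>. Removing the first
  subtree of the root, a tree with at least one edge is a triple (mark, first subtree, rest), so
  \<open>B = z\<^sub>1\<close> and the series \<open>A\<close> of trees whose root has no \<open>+\<close> edge satisfy
  \<open>B = 1 + g (2D + B) B\<close> and \<open>A = 1 + g (D + B) A\<close>, where \<open>D = B + (\<frak>g - 1) A\<close> counts a subtree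
  hanging from a \<open>+\<close> or \<open>0\<close> edge together with its top vertex. Eliminating \<open>A\<close> gives the quartic.
  Two solutions with constant term 1 differ by a factor whose cofactor has constant term 2, hence
  coincide. At \<open>\<frak>g = 1\<close> and \<open>\<frak>g = 0\<close> the quartic splits into two quadratics; one of them has nonzero
  constant term at \<open>z\<^sub>1\<close>, so the other vanishes and is solved by the formal square root.\<close>

fun no_plus_child :: "mtree \<Rightarrow> bool" where
  "no_plus_child (Node cs) \<longleftrightarrow> (\<forall>c\<in>set cs. fst c \<noteq> MPlus)"

fun local_maxima :: "mtree \<Rightarrow> nat" where
  "local_maxima (Node cs) =
     (\<Sum>c\<leftarrow>cs. (if fst c \<noteq> MMinus \<and> no_plus_child (snd c) then 1 else 0) + local_maxima (snd c))"

lemma is_locmax_child_iff: "is_locmax l (l + delta m) t \<longleftrightarrow> m \<noteq> MMinus \<and> no_plus_child t"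
proof -
  have "0 \<le> delta m \<longleftrightarrow> m \<noteq> MMinus" "\<And>m. delta m \<le> 0 \<longleftrightarrow> m \<noteq> MPlus"
    by (cases m; simp) (case_tac m; simp)
  then show ?thesis by (cases t) auto
qed

lemma locmax_below_eq_local_maxima: "locmax_below l T = local_maxima T"
  by (induction l T rule: locmax_below.induct)
     (auto simp: is_locmax_child_iff intro!: arg_cong[where f = sum_list] map_cong)

fun add_first_child :: "mark \<Rightarrow> mtree \<Rightarrow> mtree \<Rightarrow> mtree" where
  "add_first_child m t (Node cs) = Node ((m, t) # cs)"

lemma edges_add_first_child: "edges (add_first_child m t c) = Suc (edges t + edges c)"
  by (cases c) simp

lemma no_plus_child_add_first_child:
  "no_plus_child (add_first_child m t c) \<longleftrightarrow> m \<noteq> MPlus \<and> no_plus_child c"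
  by (cases c) simp

definition top_maximum :: "mark \<Rightarrow> mtree \<Rightarrow> nat" where
  "top_maximum m t = (if m \<noteq> MMinus \<and> no_plus_child t then 1 else 0)"

lemma local_maxima_add_first_child:
  "local_maxima (add_first_child m t c) = top_maximum m t + local_maxima t + local_maxima c"
  by (cases c) (simp add: top_maximum_def)

lemma inj_add_first_child: "inj_on (\<lambda>(m, t, c). add_first_child m t c) A"
proof (rule inj_onI, clarsimp)
  fix m t c m' t' c'
  assume "add_first_child m t c = add_first_child m' t' c'"
  then show "m = m' \<and> t = t' \<and> c = c'" by (cases c; cases c') auto
qed

lemma edges_eq_0_set: "{T. edges T = 0} = {Node []}"
proof -
  have "T = Node []" if "edges T = 0" for T
    using that by (cases T, rename_tac cs, case_tac cs) auto
  then show ?thesis by auto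
qed

lemma edges_eq_Suc_set:
  "{T. edges T = Suc n} =
     (\<lambda>(m, t, c). add_first_child m t c) ` (UNIV \<times> {(t, c). edges t + edges c = n})"
proof (intro equalityI subsetI)
  fix T assume "T \<in> {T. edges T = Suc n}"
  then have e: "edges T = Suc n" by simp
  obtain cs where T: "T = Node cs" by (cases T)
  with e obtain m t cs' where "cs = (m, t) # cs'" by (cases cs) auto
  with T e show "T \<in> (\<lambda>(m, t, c). add_first_child m t c) ` (UNIV \<times> {(t, c). edges t + edges c = n})"
    by (auto intro!: image_eqI[where x = "(m, t, Node cs')"])
qed (auto simp: edges_add_first_child)

lemma UNIV_mark: "(UNIV :: mark set) = {MPlus, MZero, MMinus}"
  using mark.exhaust by auto

lemma finite_edges_eq: "finite {T. edges T = n}"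
proof (induction n rule: less_induct)
  case (less n)
  show ?case
  proof (cases n)
    case 0
    then show ?thesis by (simp add: edges_eq_0_set)
  next
    case (Suc k)
    let ?U = "\<Union>i\<le>k. {T. edges T = i}"
    have "{(t, c). edges t + edges c = k} \<subseteq> ?U \<times> ?U" by auto
    moreover have "finite (?U \<times> ?U)" using less Suc by auto
    ultimately have "finite {(t, c). edges t + edges c = k}" by (rule finite_subset)
    then show ?thesis unfolding Suc edges_eq_Suc_set by (simp add: UNIV_mark)
  qed
qed

lemma sum_edges_eq_Suc:
  fixes f :: "mtree \<Rightarrow> 'a::comm_semiring_1"
  assumes f: "\<And>m t c. f (add_first_child m t c) = a m t * b c"
  shows "(\<Sum>T | edges T = Suc n. f T) =
     (\<Sum>m\<in>UNIV. \<Sum>i\<le>n. (\<Sum>t | edges t = i. a m t) * (\<Sum>c | edges c = n - i. b c))"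
proof -
  let ?Q = "{(t, c). edges t + edges c = n}"
  have Q: "?Q = (\<Union>i\<le>n. {t. edges t = i} \<times> {c. edges c = n - i})" by auto
  have "(\<Sum>T | edges T = Suc n. f T) = (\<Sum>(m, p)\<in>UNIV \<times> ?Q. a m (fst p) * b (snd p))"
    unfolding edges_eq_Suc_set sum.reindex[OF inj_add_first_child]
    by (rule sum.cong) (auto simp: f)
  also have "\<dots> = (\<Sum>m\<in>UNIV. \<Sum>p\<in>?Q. a m (fst p) * b (snd p))"
    by (rule sum.cartesian_product[symmetric])
  also have "\<dots> = (\<Sum>m\<in>UNIV. \<Sum>i\<le>n. \<Sum>p\<in>{t. edges t = i} \<times> {c. edges c = n - i}. a m (fst p) * b (snd p))"
    unfolding Q by (intro sum.cong refl sum.UNION_disjoint) (auto simp: finite_edges_eq)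
  also have "\<dots> = (\<Sum>m\<in>UNIV. \<Sum>i\<le>n. (\<Sum>t | edges t = i. a m t) * (\<Sum>c | edges c = n - i. b c))"
    by (simp add: sum_product sum.cartesian_product split_beta)
  finally show ?thesis .
qed

definition tree_gf :: "(mtree \<Rightarrow> 'a::comm_semiring_1) \<Rightarrow> 'a fps" where
  "tree_gf w = Abs_fps (\<lambda>n. \<Sum>T | edges T = n. w T)"

lemma tree_gf_nth: "tree_gf w $ n = (\<Sum>T | edges T = n. w T)"
  by (simp add: tree_gf_def)

lemma tree_gf_add: "tree_gf (\<lambda>t. v t + w t) = tree_gf v + tree_gf w"
  by (rule fps_ext) (simp add: tree_gf_nth sum.distrib)

lemma tree_gf_cmult: "tree_gf (\<lambda>t. c * w t) = fps_const c * tree_gf w"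
  by (rule fps_ext) (simp add: tree_gf_nth sum_distrib_left)

lemma tree_gf_zero: "tree_gf (\<lambda>t. 0) = 0"
  by (rule fps_ext) (simp add: tree_gf_nth)

lemma tree_gf_add_first_child:
  assumes "\<And>m t c. w (add_first_child m t c) = a m t * b c"
  shows "tree_gf w = fps_const (w (Node [])) + fps_X * ((\<Sum>m\<in>UNIV. tree_gf (a m)) * tree_gf b)"
proof (rule fps_ext)
  fix n
  show "tree_gf w $ n = (fps_const (w (Node [])) + fps_X * ((\<Sum>m\<in>UNIV. tree_gf (a m)) * tree_gf b)) $ n"
  proof (cases n)
    case 0
    then show ?thesis by (simp add: tree_gf_nth edges_eq_0_set)
  next
    case (Suc k)
    have "tree_gf w $ n = (\<Sum>m\<in>UNIV. \<Sum>i\<le>k. tree_gf (a m) $ i * tree_gf b $ (k - i))"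
      unfolding Suc tree_gf_nth by (rule sum_edges_eq_Suc[where f = w and a = a and b = b, OF assms])
    also have "\<dots> = ((\<Sum>m\<in>UNIV. tree_gf (a m)) * tree_gf b) $ k"
      by (simp add: sum_distrib_right fps_sum_nth fps_mult_nth atLeast0AtMost)
    finally show ?thesis using Suc by simp
  qed
qed

definition tree_weight :: "mtree \<Rightarrow> real poly" where
  "tree_weight t = monom 1 (local_maxima t)"

definition no_plus_weight :: "mtree \<Rightarrow> real poly" where
  "no_plus_weight t = (if no_plus_child t then monom 1 (local_maxima t) else 0)"

definition hung_weight :: "mtree \<Rightarrow> real poly" where
  "hung_weight t = monom 1 (top_maximum MZero t + local_maxima t)"

lemma z1_eq_tree_gf: "z1 = tree_gf tree_weight"
  by (simp add: z1_def tree_gf_def tree_weight_def locmax_def locmax_below_eq_local_maxima)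

lemma tree_gf_tree_weight:
  "tree_gf tree_weight =
     1 + fps_X * ((tree_gf hung_weight + tree_gf hung_weight + tree_gf tree_weight) * tree_gf tree_weight)"
proof -
  have "tree_gf tree_weight = fps_const (tree_weight (Node [])) +
      fps_X * ((\<Sum>m\<in>UNIV. tree_gf (\<lambda>t. monom 1 (top_maximum m t + local_maxima t))) * tree_gf tree_weight)"
    by (rule tree_gf_add_first_child)
       (simp add: tree_weight_def local_maxima_add_first_child mult_monom)
  moreover have "top_maximum MPlus = top_maximum MZero"
    "(\<lambda>t. monom 1 (top_maximum MMinus t + local_maxima t)) = tree_weight"
    by (auto simp: top_maximum_def tree_weight_def)
  ultimately show ?thesis
    by (simp add: UNIV_mark tree_weight_def hung_weight_def[abs_def])
qed

lemma tree_gf_no_plus_weight: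
  "tree_gf no_plus_weight = 1 + fps_X * ((tree_gf hung_weight + tree_gf tree_weight) * tree_gf no_plus_weight)"
proof -
  have "tree_gf no_plus_weight = fps_const (no_plus_weight (Node [])) +
      fps_X * ((\<Sum>m\<in>UNIV. tree_gf (\<lambda>t. if m = MPlus then 0 else monom 1 (top_maximum m t + local_maxima t)))
               * tree_gf no_plus_weight)"
    by (rule tree_gf_add_first_child)
       (simp add: no_plus_weight_def local_maxima_add_first_child no_plus_child_add_first_child mult_monom)
  moreover have "(\<lambda>t. monom 1 (top_maximum MMinus t + local_maxima t)) = tree_weight"
    by (auto simp: top_maximum_def tree_weight_def)
  ultimately show ?thesis
    by (simp add: UNIV_mark no_plus_weight_def hung_weight_def[abs_def] tree_gf_zero)
qed

lemma tree_gf_hung_weight: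
  "tree_gf hung_weight = tree_gf tree_weight + fps_const ([:0, 1:] - 1) * tree_gf no_plus_weight"
proof -
  have "hung_weight t = tree_weight t + ([:0, 1:] - 1) * no_plus_weight t" for t
    by (auto simp: hung_weight_def tree_weight_def no_plus_weight_def top_maximum_def
                   monom_Suc mult_monom algebra_simps)
  then have "tree_gf hung_weight = tree_gf (\<lambda>t. tree_weight t + ([:0, 1:] - 1) * no_plus_weight t)"
    by (metis ext)
  then show ?thesis by (simp only: tree_gf_add tree_gf_cmult)
qed

lemma quartic_of_tree_equations:
  fixes B A D X x :: "'a::idom"
  assumes B: "B = 1 + X * ((D + D + B) * B)"
    and A: "A = 1 + X * ((D + B) * A)"
    and D: "D = B + (x - 1) * A"
  shows "3 * X^2 * B^4 - 4 * X * B^3 + (1 + 2 * X * (1 - 2 * x)) * B^2 - 1 = 0"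
proof -
  define u where "u = 1 - x"
  define eB where "eB = B - 1 - X * (3 * B - 2 * u * A) * B"
  define eA where "eA = A - 1 - X * (2 * B - u * A) * A"
  have "eB = 0" using B D unfolding eB_def u_def by (simp add: algebra_simps)
  moreover have "eA = 0" using A D unfolding eA_def u_def by (simp add: algebra_simps)
  moreover have "- (3 * X^2 * B^4 - 4 * X * B^3 + (1 + 2 * X * (1 - 2 * x)) * B^2 - 1)
      = 4 * X * u * B^2 * eA + eB * (eB - 4 * X * u * A * B + 4 * X * B^2 - 2 * B)"
    unfolding eA_def eB_def u_def by algebra
  ultimately show ?thesis by simp
qed

lemma quartic_iff:
  "quartic z \<longleftrightarrow>
     3 * fps_X^2 * z^4 - 4 * fps_X * z^3 + (1 + 2 * fps_X * (1 - 2 * fps_const [:0, 1:])) * z^2 - 1 = 0"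
proof -
  have "fps_const (1 - 2 * [:0, 1:]) = 1 - 2 * fps_const ([:0, 1:] :: real poly)"
    by (simp add: fps_numeral_fps_const)
  then show ?thesis unfolding quartic_def by (simp only: fps_numeral_fps_const)
qed

lemma quartic_z1: "quartic z1"
  unfolding quartic_iff z1_eq_tree_gf
  by (rule quartic_of_tree_equations[OF tree_gf_tree_weight tree_gf_no_plus_weight])
     (simp add: tree_gf_hung_weight)

lemma z1_nth_0: "z1 $ 0 = 1"
  by (simp add: z1_eq_tree_gf tree_gf_nth edges_eq_0_set tree_weight_def)

lemma quartic_unique:
  assumes "z $ 0 = 1" "w $ 0 = 1" "quartic z" "quartic w"
  shows "z = w"
proof -
  define X :: "real poly fps" where "X = fps_X"
  define x :: "real poly fps" where "x = fps_const [:0, 1:]"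
  define S where
    "S = 3 * X * (z^3 + z^2 * w + z * w^2 + w^3) - 4 * (z^2 + z * w + w^2) + 2 * (1 - 2 * x) * (z + w)"
  have "(3 * X^2 * z^4 - 4 * X * z^3 + (1 + 2 * X * (1 - 2 * x)) * z^2 - 1)
      - (3 * X^2 * w^4 - 4 * X * w^3 + (1 + 2 * X * (1 - 2 * x)) * w^2 - 1) = (z - w) * (X * S + (z + w))"
    unfolding S_def by algebra
  with assms have "(z - w) * (X * S + (z + w)) = 0"
    unfolding quartic_iff X_def x_def by simp
  moreover have "(X * S + (z + w)) $ 0 = 2" using assms by (simp add: X_def)
  then have "X * S + (z + w) \<noteq> 0" by (metis fps_zero_nth zero_neq_numeral)
  ultimately show ?thesis by simp
qed

lemma spec_nth: "spec a f $ n = poly (f $ n) a"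
  by (simp add: spec_def)

lemma spec_add: "spec a (f + g) = spec a f + spec a g"
  by (rule fps_ext) (simp add: spec_nth)

lemma spec_diff: "spec a (f - g) = spec a f - spec a g"
  by (rule fps_ext) (simp add: spec_nth)

lemma spec_mult: "spec a (f * g) = spec a f * spec a g"
  by (rule fps_ext) (simp add: spec_nth fps_mult_nth poly_sum)

lemma spec_const: "spec a (fps_const c) = fps_const (poly c a)"
  by (rule fps_ext) (simp add: spec_nth)

lemma spec_0: "spec a 0 = 0"
  by (rule fps_ext) (simp add: spec_nth)

lemma spec_1: "spec a 1 = 1"
  by (rule fps_ext) (simp add: spec_nth)

lemma spec_numeral: "spec a (numeral k) = numeral k"
  by (simp add: fps_numeral_fps_const spec_const)

lemma spec_fps_X: "spec a fps_X = fps_X"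
  by (rule fps_ext) (simp add: spec_nth)

lemma spec_power: "spec a (f ^ n) = spec a f ^ n"
  by (induction n) (simp_all add: spec_1 spec_mult)

lemmas spec_simps = spec_add spec_diff spec_mult spec_const spec_0 spec_1 spec_numeral spec_fps_X spec_power

lemma quartic_spec:
  assumes "quartic z"
  shows "3 * fps_X^2 * spec a z^4 - 4 * fps_X * spec a z^3
         + (1 + 2 * fps_X * (1 - 2 * fps_const a)) * spec a z^2 - 1 = 0"
proof -
  have "spec a (3 * fps_X^2 * z^4 - 4 * fps_X * z^3
                + (1 + 2 * fps_X * (1 - 2 * fps_const [:0, 1:])) * z^2 - 1) = 0"
    using assms unfolding quartic_iff by (simp add: spec_0)
  then show ?thesis by (simp add: spec_simps)
qed

text \<open>The root of \<open>c g s\<^sup>2 - s + 1\<close> with constant term 1 is the quadratic formula with the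
  principal square root, since \<open>(1 - 2 c g s)\<^sup>2 = 1 - 4 c g\<close>.\<close>

lemma fps_sqrt_quadratic_root:
  fixes s :: "real fps"
  assumes s0: "s $ 0 = 1" and root: "fps_const c * fps_X * s^2 - s + 1 = 0"
  shows "fps_const (2 * c) * fps_X * s = 1 - fps_sqrt (1 - fps_const (4 * c) * fps_X)"
proof -
  define r where "r = 1 - 2 * fps_const c * fps_X * s"
  define b where "b = 1 - 4 * fps_const c * fps_X"
  have "r^2 - b = 4 * fps_const c * fps_X * (fps_const c * fps_X * s^2 - s + 1)"
    unfolding r_def b_def by algebra
  with root have "r ^ Suc 1 = b" by (simp add: numeral_2_eq_2)
  moreover have "b $ 0 = 1" "r $ 0 = 1" by (simp_all add: b_def r_def s0)
  ultimately have "fps_sqrt b = r"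
    using radical_unique[where r = "\<lambda>k x. root k x" and k = 1 and b = b and a = r]
    by (simp add: fps_sqrt_def numeral_2_eq_2)
  then show ?thesis by (simp add: r_def b_def fps_numeral_fps_const)
qed

lemma spec_1_z1: "fps_const 6 * fps_X * spec 1 z1 = 1 - fps_sqrt (1 - fps_const 12 * fps_X)"
proof -
  define s where "s = spec 1 z1"
  have s0: "s $ 0 = 1" by (simp add: s_def spec_nth z1_nth_0)
  have "(3 * fps_X * s^2 - s + 1) * (fps_X * s^2 - s - 1)
      = 3 * fps_X^2 * s^4 - 4 * fps_X * s^3 + (1 + 2 * fps_X * (1 - 2 * fps_const 1)) * s^2 - 1"
    by (simp add: algebra_simps) algebra
  also have "\<dots> = 0" unfolding s_def by (rule quartic_spec[OF quartic_z1])
  finally have "(3 * fps_X * s^2 - s + 1) * (fps_X * s^2 - s - 1) = 0" .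
  moreover have "(fps_X * s^2 - s - 1) $ 0 = -2" using s0 by simp
  then have "fps_X * s^2 - s - 1 \<noteq> 0" by (metis fps_zero_nth zero_neq_neg_numeral)
  ultimately have "fps_const 3 * fps_X * s^2 - s + 1 = 0" by (simp add: fps_numeral_fps_const)
  from fps_sqrt_quadratic_root[OF s0 this] show ?thesis by (simp add: s_def)
qed

lemma spec_0_z1: "fps_const 2 * fps_X * spec 0 z1 = 1 - fps_sqrt (1 - fps_const 4 * fps_X)"
proof -
  define s where "s = spec 0 z1"
  have s0: "s $ 0 = 1" by (simp add: s_def spec_nth z1_nth_0)
  have "(fps_X * s^2 - s + 1) * (3 * fps_X * s^2 - s - 1)
      = 3 * fps_X^2 * s^4 - 4 * fps_X * s^3 + (1 + 2 * fps_X * (1 - 2 * fps_const 0)) * s^2 - 1"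
    by simp algebra
  also have "\<dots> = 0" unfolding s_def by (rule quartic_spec[OF quartic_z1])
  finally have "(fps_X * s^2 - s + 1) * (3 * fps_X * s^2 - s - 1) = 0" .
  moreover have "(3 * fps_X * s^2 - s - 1) $ 0 = -2" using s0 by simp
  then have "3 * fps_X * s^2 - s - 1 \<noteq> 0" by (metis fps_zero_nth zero_neq_neg_numeral)
  ultimately have "fps_const 1 * fps_X * s^2 - s + 1 = 0" by simp
  from fps_sqrt_quadratic_root[OF s0 this] show ?thesis by (simp add: s_def)
qed

theorem mainTheorem8:
  shows "fps_nth z1 0 = 1 \<and> quartic z1
         \<and> (\<forall>z. fps_nth z 0 = 1 \<and> quartic z \<longrightarrow> z = z1)
         \<and> fps_const 6 * fps_X * spec 1 z1 = 1 - fps_sqrt (1 - fps_const 12 * fps_X)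
         \<and> fps_const 2 * fps_X * spec 0 z1 = 1 - fps_sqrt (1 - fps_const 4 * fps_X)"
  using z1_nth_0 quartic_z1 quartic_unique[OF _ z1_nth_0 _ quartic_z1] spec_1_z1 spec_0_z1 by blast

end
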